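(* Let $X\subseteq\mathbb{P}^n$ be a real non-degenerate closed subscheme and let $p\geq 1$ be an integer. If $X$ satisfies the $p$-base-point-free property, then the Hankel index satisfies $\eta(X)\geq p+1$.
   Context: Let $S=\mathbb{R}[x_0,\dots,x_n]$, $S_d$ its degree-$d$ part. For a closed subscheme $X\subseteq\mathbb{P}^n$ over $\mathbb{R}$ (points taken over $\mathbb{C}$, real points $X(\mathbb{R})$), $I=I(X)\subseteq S$ is its saturated homogeneous ideal and $R=S/I$ its homogeneous coordinate ring. $X$ is non-degenerate if it is not contained in a hyperplane. $\Sigma_X\subseteq R_2$ is the cone of sums of squares of elements of $R_1$ and $\Sigma_X^*\subseteq R_2^*$ its dual cone, regarded inside $S_2^*$ via the dual of the quotient map $S_2\to R_2$. For $\ell\in S_2^*$ let $B_\ell$ be the symmetric bilinear form $(f,g)\mapsto \ell(fg)$ on $S_1$; the rank of $\ell$ is the rank of $B_\ell$. With $S_+$ the cone of $\ell\in S_2^*$ with $B_\ell$ positive semidefinite, $\Sigma_X^*=S_+\cap I_2^\perp$ (the Hankel spectrahedron of $X$). The rank of an extreme ray is the rank of any nonzero element spanning it. The Hankel index $\eta(X)$ is the smallest integer $p>1$ such that $\Sigma_X^*$ has an extreme ray of rank $p$; $\eta(X)=\infty$ if all extreme rays of $\Sigma_X^*$ have rank $1$. A linear series is a vector subspace $W\subseteq R_1$; it is base-point-free on $X$ if the forms in $W$ have no common zero on $X$ (over $\mathbb{C}$). $X$ satisfies the $p$-base-point-free property if for every base-point-free linear series $W\subseteq R_1$ of codimension at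 most $p$ in $R_1$, the ideal of $R$ generated by $W$ contains $R_2$. *)

theory Defs
  imports "HOL-Analysis.Analysis" "HOL-Library.Poly_Mapping" "HOL-Library.Extended_Nat"
begin

text \<open>Polynomials with real coefficients in the variables indexed by the finite type 'n
  (so CARD('n) = n+1 and the ambient space is P^n).\<close>

type_synonym 'n mpoly = "('n \<Rightarrow>\<^sub>0 nat) \<Rightarrow>\<^sub>0 real"

definition mon_deg :: "('n::finite \<Rightarrow>\<^sub>0 nat) \<Rightarrow> nat" where
  "mon_deg m = (\<Sum>i\<in>UNIV. Poly_Mapping.lookup m i)"

text \<open>f is homogeneous of degree d (0 counts as homogeneous of every degree); S_d = {f. hom_deg d f}.\<close>
definition hom_deg :: "nat \<Rightarrow> 'n::finite mpoly \<Rightarrow> bool" where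
  "hom_deg d f \<longleftrightarrow> (\<forall>m \<in> Poly_Mapping.keys f. mon_deg m = d)"

definition var :: "'n \<Rightarrow> 'n mpoly" where
  "var i = Poly_Mapping.single (Poly_Mapping.single i 1) 1"

definition lin :: "real^'n::finite \<Rightarrow> 'n mpoly" where
  "lin a = (\<Sum>i\<in>UNIV. Poly_Mapping.single (Poly_Mapping.single i 1) (a $ i))"

definition ideal_gen :: "'n mpoly set \<Rightarrow> 'n mpoly set" where
  "ideal_gen A = {f. \<exists>F c. finite F \<and> F \<subseteq> A \<and> f = (\<Sum>a\<in>F. c a * a)}"

definition homogeneous_ideal :: "'n::finite mpoly set \<Rightarrow> bool" where
  "homogeneous_ideal I \<longleftrightarrow> I = ideal_gen (I \<inter> {f. \<exists>d. hom_deg d f})"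

text \<open>Saturation with respect to the irrelevant ideal m = (x_0,...,x_n): (I : m^\<infinity>) = I.\<close>
definition saturated :: "'n::finite mpoly set \<Rightarrow> bool" where
  "saturated I \<longleftrightarrow> (\<forall>f. (\<exists>k. \<forall>g. hom_deg k g \<longrightarrow> g * f \<in> I) \<longrightarrow> f \<in> I)"

definition ceval :: "'n::finite mpoly \<Rightarrow> ('n \<Rightarrow> complex) \<Rightarrow> complex" where
  "ceval f z = (\<Sum>m\<in>Poly_Mapping.keys f. complex_of_real (Poly_Mapping.lookup f m) * (\<Prod>i\<in>UNIV. z i ^ Poly_Mapping.lookup m i))"

text \<open>Complex points of X = V(I), given by nonzero affine representatives.\<close>
definition cpoints :: "'n::finite mpoly set \<Rightarrow> ('n \<Rightarrow> complex) set" where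
  "cpoints I = {z. z \<noteq> (\<lambda>_. 0) \<and> (\<forall>f\<in>I. ceval f z = 0)}"

text \<open>X is not contained (scheme-theoretically) in any hyperplane: no nonzero linear form lies in I(X).\<close>
definition nondegenerate :: "'n::finite mpoly set \<Rightarrow> bool" where
  "nondegenerate I \<longleftrightarrow> (\<forall>a. a \<noteq> 0 \<longrightarrow> lin a \<notin> I)"

text \<open>Since X is non-degenerate, R_1 = S_1, identified with real^'n via lin;
  a linear series is a subspace W, of codimension CARD('n) - dim W. The ideal of R generated by W
  contains R_2 iff every f in S_2 lies in the ideal of S generated by W and I.\<close>
definition base_point_free :: "'n::finite mpoly set \<Rightarrow> (real^'n) set \<Rightarrow> bool" where
  "base_point_free I W \<longleftrightarrow> \<not> (\<exists>z\<in>cpoints I. \<forall>a\<in>W. ceval (lin a) z = 0)"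

definition p_bpf :: "nat \<Rightarrow> 'n::finite mpoly set \<Rightarrow> bool" where
  "p_bpf p I \<longleftrightarrow> (\<forall>W. subspace W \<and> CARD('n) - dim W \<le> p \<and> base_point_free I W \<longrightarrow>
      (\<forall>f. hom_deg 2 f \<longrightarrow> f \<in> ideal_gen (lin ` W \<union> I)))"

text \<open>Elements of S_2^*: functions linear on S_2 and vanishing outside S_2 (canonical representatives).\<close>
definition dual2 :: "('n::finite mpoly \<Rightarrow> real) \<Rightarrow> bool" where
  "dual2 L \<longleftrightarrow> (\<forall>f g. hom_deg 2 f \<longrightarrow> hom_deg 2 g \<longrightarrow> L (f + g) = L f + L g)
     \<and> (\<forall>c f. hom_deg 2 f \<longrightarrow> L (Poly_Mapping.single 0 c * f) = c * L f)
     \<and> (\<forall>f. \<not> hom_deg 2 f \<longrightarrow> L f = 0)"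

text \<open>Hankel spectrahedron Sigma_X^* = S_+ \<inter> I_2^\<perp>; B_L(f,f) = L(f^2) >= 0 for f in S_1.\<close>
definition hankel_cone :: "'n::finite mpoly set \<Rightarrow> ('n mpoly \<Rightarrow> real) set" where
  "hankel_cone I = {L. dual2 L \<and> (\<forall>a. L (lin a * lin a) \<ge> 0) \<and> (\<forall>q\<in>I. hom_deg 2 q \<longrightarrow> L q = 0)}"

definition extreme_ray :: "('a \<Rightarrow> real) set \<Rightarrow> ('a \<Rightarrow> real) \<Rightarrow> bool" where
  "extreme_ray K L \<longleftrightarrow> L \<in> K \<and> L \<noteq> (\<lambda>_. 0) \<and>
     (\<forall>L1 L2. L1 \<in> K \<and> L2 \<in> K \<and> L = (\<lambda>x. L1 x + L2 x) \<longrightarrow> (\<exists>c\<ge>0. L1 = (\<lambda>x. c * L x)))"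

text \<open>Gram matrix of B_L in the basis x_0..x_n; rank of L = rank of B_L.\<close>
definition gram :: "('n::finite mpoly \<Rightarrow> real) \<Rightarrow> real^'n^'n" where
  "gram L = (\<chi> i j. L (var i * var j))"

definition hank_rank :: "('n::finite mpoly \<Rightarrow> real) \<Rightarrow> nat" where
  "hank_rank L = rank (gram L)"

definition hankel_index :: "'n::finite mpoly set \<Rightarrow> enat" where
  "hankel_index I =
     (if \<exists>L. extreme_ray (hankel_cone I) L \<and> hank_rank L > 1
      then enat (LEAST r. r > 1 \<and> (\<exists>L. extreme_ray (hankel_cone I) L \<and> hank_rank L = r))
      else \<infinity>)"

end

theory Submission
  imports Defs
begin

text \<open>Let \<open>L\<close> span an extreme ray of rank \<open>r\<close> with \<open>1 < r \<le> p\<close>, and let \<open>W\<close> be the kernel of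
  \<open>B\<^sub>L\<close>, a linear series of codimension \<open>r\<close>. If \<open>W\<close> is base-point-free, the \<open>p\<close>-base-point-free
  property puts \<open>S\<^sub>2\<close> into the ideal generated by \<open>W\<close> and \<open>I\<close>; but \<open>L\<close> vanishes on
  \<open>W \<cdot> S\<^sub>1\<close> and on \<open>I\<^sub>2\<close>, so \<open>L = 0\<close>. Otherwise \<open>W\<close> has a base point \<open>z \<in> X(\<complex>)\<close>. Since
  \<open>Re z\<close> and \<open>Im z\<close> annihilate the kernel of \<open>B\<^sub>L\<close>, the functionals \<open>f \<mapsto> Re (c f(z))\<close> are
  dominated by \<open>L\<close> on squares, so \<open>L\<close> plus or minus a small multiple of them stays in the cone and
  extremality makes them multiples of \<open>L\<close>. Hence \<open>z\<^sub>i z\<^sub>j\<close> is proportional to the Gram matrix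
  of \<open>L\<close>, which therefore has rank one.\<close>

section \<open>Homogeneous polynomials and generated ideals\<close>

lemma mon_deg_add: "mon_deg (a + b) = mon_deg a + mon_deg b"
  by (simp add: mon_deg_def lookup_add sum.distrib)

lemma mon_deg_single [simp]: "mon_deg (Poly_Mapping.single (i::'n::finite) k) = k"
  by (simp add: mon_deg_def lookup_single when_def)

lemma mon_deg_zero [simp]: "mon_deg (0::'n::finite \<Rightarrow>\<^sub>0 nat) = 0"
  by (simp add: mon_deg_def)

lemma mon_deg_eq_1_imp_single:
  assumes "mon_deg (m::'n::finite \<Rightarrow>\<^sub>0 nat) = 1"
  obtains i where "m = Poly_Mapping.single i 1"
proof -
  have total: "(\<Sum>j\<in>UNIV. Poly_Mapping.lookup m j) = 1"
    using assms by (simp add: mon_deg_def)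
  then obtain i where "Poly_Mapping.lookup m i \<noteq> 0"
    by (metis (mono_tags, lifting) sum.neutral zero_neq_one)
  moreover have "(\<Sum>j\<in>UNIV. Poly_Mapping.lookup m j)
      = Poly_Mapping.lookup m i + (\<Sum>j\<in>UNIV - {i}. Poly_Mapping.lookup m j)"
    by (simp add: sum.remove)
  ultimately have "Poly_Mapping.lookup m i = 1" and "(\<Sum>j\<in>UNIV - {i}. Poly_Mapping.lookup m j) = 0"
    using total by linarith+
  then have "m = Poly_Mapping.single i 1"
    by (intro poly_mapping_eqI) (auto simp: lookup_single when_def)
  then show thesis by (rule that)
qed

lemma hom_deg_0 [simp]: "hom_deg d 0"
  by (simp add: hom_deg_def)

lemma hom_deg_add: "hom_deg d f \<Longrightarrow> hom_deg d g \<Longrightarrow> hom_deg d (f + g)"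
  unfolding hom_deg_def using keys_add[of f g] by blast

lemma hom_deg_sum: "(\<And>x. x \<in> A \<Longrightarrow> hom_deg d (f x)) \<Longrightarrow> hom_deg d (sum f A)"
  by (induction A rule: infinite_finite_induct) (auto intro: hom_deg_add)

lemma hom_deg_single: "hom_deg (mon_deg m) (Poly_Mapping.single m c)"
  by (simp add: hom_deg_def)

lemma hom_deg_mult: "hom_deg d f \<Longrightarrow> hom_deg e g \<Longrightarrow> hom_deg (d + e) (f * g)"
  unfolding hom_deg_def using keys_mult[of f g] by (force simp: mon_deg_add)

lemma hom_deg_scale: "hom_deg d f \<Longrightarrow> hom_deg d (Poly_Mapping.single 0 c * f)"
  using hom_deg_mult[OF hom_deg_single[of 0 c]] by simp

lemma hom_deg_var: "hom_deg 1 (var i)"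
  unfolding var_def using hom_deg_single[of "Poly_Mapping.single i 1"] by simp

lemma hom_deg_var_mult: "hom_deg 2 (var i * var j)"
  using hom_deg_mult[OF hom_deg_var hom_deg_var, of i j] by (simp only: one_add_one)

lemma lin_eq_sum_var: "lin a = (\<Sum>i\<in>UNIV. Poly_Mapping.single 0 (a $ i) * var i)"
  by (simp add: lin_def var_def mult_single)

lemma lin_axis: "lin (axis i c) = Poly_Mapping.single (Poly_Mapping.single i 1) c"
  unfolding lin_def axis_def by (simp add: if_distrib cong: if_cong)

lemma hom_deg_lin: "hom_deg 1 (lin a)"
  unfolding lin_eq_sum_var by (intro hom_deg_sum hom_deg_scale hom_deg_var)

lemma hom_deg_lin_mult_lin: "hom_deg 2 (lin a * lin b)"
  using hom_deg_mult[OF hom_deg_lin hom_deg_lin, of a b] by (simp only: one_add_one)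

lemma lin_mult_lin:
  "lin a * lin b = (\<Sum>i\<in>UNIV. \<Sum>j\<in>UNIV. Poly_Mapping.single 0 (a $ i * b $ j) * (var i * var j))"
  unfolding lin_eq_sum_var sum_product by (intro sum.cong refl) (simp add: mult_single ac_simps)

lemma poly_mapping_sum_single:
  "f = (\<Sum>m\<in>Poly_Mapping.keys f. Poly_Mapping.single m (Poly_Mapping.lookup f m))"
  by (rule poly_mapping_eqI)
    (auto simp: lookup_sum lookup_single when_def in_keys_iff sum.delta)

definition hom_component :: "nat \<Rightarrow> 'n::finite mpoly \<Rightarrow> 'n mpoly" where
  "hom_component k f = Abs_poly_mapping (\<lambda>m. if mon_deg m = k then Poly_Mapping.lookup f m else 0)"

lemma lookup_hom_component:
  "Poly_Mapping.lookup (hom_component k f) m = (if mon_deg m = k then Poly_Mapping.lookup f m else 0)"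
proof -
  have "finite {m. (if mon_deg m = k then Poly_Mapping.lookup f m else 0) \<noteq> 0}"
    by (rule finite_subset[of _ "Poly_Mapping.keys f"]) (auto simp: in_keys_iff)
  then show ?thesis by (simp add: hom_component_def Abs_poly_mapping_inverse)
qed

lemma hom_component_add: "hom_component k (f + g) = hom_component k f + hom_component k g"
  by (rule poly_mapping_eqI) (simp add: lookup_hom_component lookup_add)

lemma hom_deg_hom_component: "hom_deg k (hom_component k f)"
  unfolding hom_deg_def by (auto simp: in_keys_iff lookup_hom_component split: if_splits)

lemma hom_component_eq_self: "hom_deg k f \<Longrightarrow> hom_component k f = f"
  unfolding hom_deg_def by (intro poly_mapping_eqI) (auto simp: lookup_hom_component in_keys_iff)

lemma hom_component_eq_0: "hom_deg d f \<Longrightarrow> d \<noteq> k \<Longrightarrow> hom_component k f = 0"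
  unfolding hom_deg_def by (intro poly_mapping_eqI) (auto simp: lookup_hom_component in_keys_iff)

lemma hom_component_0 [simp]: "hom_component k 0 = 0"
  by (simp add: hom_component_eq_self)

lemma hom_component_sum: "hom_component k (sum f A) = (\<Sum>x\<in>A. hom_component k (f x))"
  by (induction A rule: infinite_finite_induct) (auto simp: hom_component_add)

lemma ideal_gen_base: "a \<in> A \<Longrightarrow> a \<in> ideal_gen A"
  unfolding ideal_gen_def by (intro CollectI exI[of _ "{a}"] exI[of _ "\<lambda>_. 1"]) simp

lemma ideal_gen_zero: "0 \<in> ideal_gen A"
  unfolding ideal_gen_def by (intro CollectI exI[of _ "{}"]) simp

lemma ideal_gen_add:
  assumes "f \<in> ideal_gen A" and "g \<in> ideal_gen A"
  shows "f + g \<in> ideal_gen A"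
proof -
  obtain F c G d where F: "finite F" "F \<subseteq> A" "f = (\<Sum>a\<in>F. c a * a)"
    and G: "finite G" "G \<subseteq> A" "g = (\<Sum>a\<in>G. d a * a)"
    using assms unfolding ideal_gen_def by blast
  define e where "e a = (if a \<in> F then c a else 0) + (if a \<in> G then d a else 0)" for a
  have "(\<Sum>a\<in>F \<union> G. e a * a)
      = (\<Sum>a\<in>F \<union> G. if a \<in> F then c a * a else 0) + (\<Sum>a\<in>F \<union> G. if a \<in> G then d a * a else 0)"
    by (simp add: e_def distrib_right sum.distrib if_distrib[of "\<lambda>x. x * _"] cong: if_cong)
  also have "\<dots> = f + g"
    using F G by (simp add: sum.inter_restrict[symmetric] Int_absorb1)
  finally show ?thesis
    using F G unfolding ideal_gen_def by (intro CollectI exI[of _ "F \<union> G"] exI[of _ e]) auto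
qed

lemma ideal_gen_mult: "f \<in> ideal_gen A \<Longrightarrow> g * f \<in> ideal_gen A"
proof -
  assume "f \<in> ideal_gen A"
  then obtain F c where F: "finite F" "F \<subseteq> A" "f = (\<Sum>a\<in>F. c a * a)"
    unfolding ideal_gen_def by blast
  then have "g * f = (\<Sum>a\<in>F. (g * c a) * a)"
    by (simp add: sum_distrib_left mult.assoc)
  then show ?thesis
    using F unfolding ideal_gen_def by (intro CollectI exI[of _ F] exI[of _ "\<lambda>a. g * c a"]) simp
qed

lemma ideal_gen_sum: "(\<And>x. x \<in> S \<Longrightarrow> f x \<in> ideal_gen A) \<Longrightarrow> sum f S \<in> ideal_gen A"
  by (induction S rule: infinite_finite_induct) (auto intro: ideal_gen_add ideal_gen_zero)

lemma ideal_gen_subset: "A \<subseteq> ideal_gen B \<Longrightarrow> ideal_gen A \<subseteq> ideal_gen B"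
  unfolding ideal_gen_def[of A] by (blast intro: ideal_gen_sum ideal_gen_mult)

lemma homogeneous_ideal_mult: "homogeneous_ideal I \<Longrightarrow> f \<in> I \<Longrightarrow> g * f \<in> I"
  unfolding homogeneous_ideal_def by (metis ideal_gen_mult)

lemma ideal_gen_Un_homogeneous_ideal:
  assumes "homogeneous_ideal I"
  shows "ideal_gen (A \<union> I) \<subseteq> ideal_gen (A \<union> (I \<inter> {f. \<exists>d. hom_deg d f}))"
proof (rule ideal_gen_subset)
  let ?B = "A \<union> (I \<inter> {f. \<exists>d. hom_deg d f})"
  have "I = ideal_gen (I \<inter> {f. \<exists>d. hom_deg d f})"
    using assms by (simp add: homogeneous_ideal_def)
  also have "\<dots> \<subseteq> ideal_gen ?B"
    by (rule ideal_gen_subset) (auto intro: ideal_gen_base)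
  finally show "A \<union> I \<subseteq> ideal_gen ?B"
    by (auto intro: ideal_gen_base)
qed

section \<open>Functionals on quadratic forms\<close>

lemma dual2_zero: "dual2 L \<Longrightarrow> L 0 = 0"
  unfolding dual2_def by (metis add_cancel_right_right add_0 hom_deg_0)

lemma dual2_add: "dual2 L \<Longrightarrow> hom_deg 2 f \<Longrightarrow> hom_deg 2 g \<Longrightarrow> L (f + g) = L f + L g"
  unfolding dual2_def by blast

lemma dual2_scale: "dual2 L \<Longrightarrow> hom_deg 2 f \<Longrightarrow> L (Poly_Mapping.single 0 c * f) = c * L f"
  unfolding dual2_def by blast

lemma dual2_sum:
  "dual2 L \<Longrightarrow> (\<And>x. x \<in> A \<Longrightarrow> hom_deg 2 (f x)) \<Longrightarrow> L (sum f A) = (\<Sum>x\<in>A. L (f x))"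
  by (induction A rule: infinite_finite_induct) (auto simp: dual2_zero dual2_add hom_deg_sum)

lemma dual2_linear_combination: "dual2 L \<Longrightarrow> dual2 M \<Longrightarrow> dual2 (\<lambda>f. s * L f + t * M f)"
  unfolding dual2_def by (simp add: algebra_simps)

lemma dual2_lin_mult_lin:
  assumes L: "dual2 L"
  shows "L (lin a * lin b) = a \<bullet> (gram L *v b)"
proof -
  have "L (lin a * lin b) = (\<Sum>i\<in>UNIV. \<Sum>j\<in>UNIV. a $ i * b $ j * L (var i * var j))"
    by (simp add: lin_mult_lin dual2_sum[OF L] dual2_scale[OF L] hom_deg_sum hom_deg_scale
        hom_deg_var_mult)
  then show ?thesis
    by (simp add: inner_vec_def matrix_vector_mult_def gram_def sum_distrib_left ac_simps)
qed

lemma transpose_gram: "transpose (gram L) = gram L"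
  by (simp add: transpose_def gram_def mult.commute vec_eq_iff)

lemma hankel_cone_psd: "L \<in> hankel_cone I \<Longrightarrow> 0 \<le> a \<bullet> (gram L *v a)"
  unfolding hankel_cone_def by (auto simp: dual2_lin_mult_lin[symmetric])

text \<open>Taking the degree-two component first makes \<open>L\<close> additive on all polynomials, so it
  suffices to test the monomial multiples of the generators.\<close>
lemma dual2_vanishes_on_ideal_gen:
  assumes L: "dual2 L"
    and gens: "\<And>a. a \<in> A \<Longrightarrow> \<exists>d. hom_deg d a \<and>
                 (\<forall>m r. mon_deg m + d = 2 \<longrightarrow> L (Poly_Mapping.single m r * a) = 0)"
    and f: "f \<in> ideal_gen A" "hom_deg 2 f"
  shows "L f = 0"
proof -
  obtain F c where F: "finite F" "F \<subseteq> A" and f_eq: "f = (\<Sum>a\<in>F. c a * a)"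
    using f(1) unfolding ideal_gen_def by blast
  define t where "t a m = Poly_Mapping.single m (Poly_Mapping.lookup (c a) m) * a" for a m
  have "c a * a = (\<Sum>m\<in>Poly_Mapping.keys (c a). t a m)" for a
    unfolding t_def by (subst (1) poly_mapping_sum_single[of "c a"]) (simp add: sum_distrib_right)
  then have "hom_component 2 f = (\<Sum>a\<in>F. \<Sum>m\<in>Poly_Mapping.keys (c a). hom_component 2 (t a m))"
    by (simp add: f_eq hom_component_sum)
  then have "L f = (\<Sum>a\<in>F. \<Sum>m\<in>Poly_Mapping.keys (c a). L (hom_component 2 (t a m)))"
    by (simp add: hom_component_eq_self[OF f(2)] dual2_sum[OF L] hom_deg_sum hom_deg_hom_component)
  also have "\<dots> = 0"
  proof (intro sum.neutral ballI)
    fix a m assume "a \<in> F"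
    then obtain d where a: "hom_deg d a"
      and vanish: "\<And>m r. mon_deg m + d = 2 \<Longrightarrow> L (Poly_Mapping.single m r * a) = 0"
      using F gens by blast
    have t_hom: "hom_deg (mon_deg m + d) (t a m)"
      unfolding t_def by (intro hom_deg_mult hom_deg_single a)
    show "L (hom_component 2 (t a m)) = 0"
    proof (cases "mon_deg m + d = 2")
      case True
      then show ?thesis using t_hom vanish by (simp add: hom_component_eq_self t_def)
    next
      case False
      then show ?thesis using t_hom by (simp add: hom_component_eq_0 dual2_zero[OF L])
    qed
  qed
  finally show ?thesis .
qed

section \<open>Evaluation at a complex point\<close>

lemma ceval_eq_sum_superset:
  "finite S \<Longrightarrow> Poly_Mapping.keys f \<subseteq> S \<Longrightarrow>
   ceval f z = (\<Sum>m\<in>S. of_real (Poly_Mapping.lookup f m) * (\<Prod>i\<in>UNIV. z i ^ Poly_Mapping.lookup m i))"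
  unfolding ceval_def by (rule sum.mono_neutral_left) (auto simp: in_keys_iff)

lemma ceval_add: "ceval (f + g) z = ceval f z + ceval g z"
proof -
  let ?S = "Poly_Mapping.keys f \<union> Poly_Mapping.keys g"
  have "Poly_Mapping.keys (f + g) \<subseteq> ?S" by (rule keys_add)
  then show ?thesis
    by (simp add: ceval_eq_sum_superset[of ?S] lookup_add distrib_right sum.distrib)
qed

lemma ceval_0 [simp]: "ceval 0 z = 0"
  by (simp add: ceval_def)

lemma ceval_sum: "ceval (sum f A) z = (\<Sum>x\<in>A. ceval (f x) z)"
  by (induction A rule: infinite_finite_induct) (simp_all add: ceval_add)

lemma ceval_scale: "ceval (Poly_Mapping.single 0 c * f) z = of_real c * ceval f z"
proof -
  have lookup: "Poly_Mapping.lookup (Poly_Mapping.single 0 c * f) m = c * Poly_Mapping.lookup f m" for m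
    by (simp add: mult_map_scale_conv_mult[symmetric] Poly_Mapping.map.rep_eq when_def)
  then have "Poly_Mapping.keys (Poly_Mapping.single 0 c * f) \<subseteq> Poly_Mapping.keys f"
    by (auto simp: in_keys_iff)
  then show ?thesis
    by (simp add: ceval_eq_sum_superset[of "Poly_Mapping.keys f"] lookup sum_distrib_left mult.assoc)
qed

lemma ceval_single:
  "ceval (Poly_Mapping.single m c) z = of_real c * (\<Prod>i\<in>UNIV. z i ^ Poly_Mapping.lookup m i)"
  by (subst ceval_eq_sum_superset[of "{m}"]) auto

lemma prod_power_lookup_single:
  "(\<Prod>k\<in>UNIV. z k ^ Poly_Mapping.lookup (Poly_Mapping.single (i::'n::finite) n) k) = z i ^ n"
  by (simp add: lookup_single when_def if_distrib[of "power _"] prod.delta' cong: if_cong)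

lemma ceval_var_mult: "ceval (var i * var j) z = z i * z j"
  by (simp add: var_def mult_single ceval_single lookup_add power_add prod.distrib
      prod_power_lookup_single)

lemma ceval_lin: "ceval (lin a) z = (\<Sum>i\<in>UNIV. of_real (a $ i) * z i)"
  by (simp add: lin_def ceval_sum ceval_single prod_power_lookup_single)

lemma ceval_lin_mult_lin: "ceval (lin a * lin b) z = ceval (lin a) z * ceval (lin b) z"
proof -
  have "ceval (lin a * lin b) z = (\<Sum>i\<in>UNIV. \<Sum>j\<in>UNIV. of_real (a $ i * b $ j) * (z i * z j))"
    by (simp add: lin_mult_lin ceval_sum ceval_scale ceval_var_mult)
  then show ?thesis
    by (simp add: ceval_lin sum_product algebra_simps)
qed

text \<open>For \<open>c = 1\<close> and \<open>c = -\<i>\<close> this is the real and the imaginary part of \<open>f(z)\<close>.\<close>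
definition eval_re :: "complex \<Rightarrow> ('n::finite \<Rightarrow> complex) \<Rightarrow> 'n mpoly \<Rightarrow> real" where
  "eval_re c z f = (if hom_deg 2 f then Re (c * ceval f z) else 0)"

lemma dual2_eval_re: "dual2 (eval_re c z)"
  by (simp add: dual2_def eval_re_def hom_deg_add hom_deg_scale ceval_add ceval_scale
      distrib_left mult.left_commute[of c])

lemma gram_eval_re: "gram (eval_re c z) $ i $ j = Re (c * (z i * z j))"
  by (simp add: gram_def eval_re_def hom_deg_var_mult ceval_var_mult)

lemma eval_re_lin_sq: "eval_re c z (lin a * lin a) = Re (c * (ceval (lin a) z)\<^sup>2)"
  by (simp add: eval_re_def hom_deg_lin_mult_lin ceval_lin_mult_lin power2_eq_square)

lemma eval_re_vanishes: "z \<in> cpoints I \<Longrightarrow> q \<in> I \<Longrightarrow> eval_re c z q = 0"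
  by (simp add: eval_re_def cpoints_def)

section \<open>Symmetric positive semidefinite matrices\<close>

lemma inner_matrix_symmetric:
  fixes G :: "real^'n::finite^'n"
  assumes "transpose G = G"
  shows "x \<bullet> (G *v y) = (G *v x) \<bullet> y"
  by (metis assms dot_lmul_matrix transpose_transpose vector_transpose_matrix)

lemma subspace_range_matrix: "subspace (range ((*v) (G::real^'n::finite^'m::finite)))"
  by (rule linear_subspace_image[OF matrix_vector_mul_linear subspace_UNIV])

lemma subspace_matrix_kernel: "subspace {w. (G::real^'n::finite^'m::finite) *v w = 0}"
  by (rule linear_subspace_kernel[OF matrix_vector_mul_linear])

lemma kernel_eq_orthogonal_comp_range:
  fixes G :: "real^'n::finite^'n"
  assumes "transpose G = G"
  shows "{w. G *v w = 0} = (range ((*v) G))\<^sup>\<bottom>"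
  unfolding orthogonal_comp_def orthogonal_def
  by (auto simp: inner_matrix_symmetric[OF assms, symmetric]) (metis inner_eq_zero_iff)

lemma dim_kernel_add_rank:
  fixes G :: "real^'n::finite^'n"
  assumes "transpose G = G"
  shows "dim {w. G *v w = 0} + rank G = CARD('n)"
  using dim_subspace_orthogonal_to_vectors[OF subspace_range_matrix subspace_UNIV, of G]
  by (simp add: kernel_eq_orthogonal_comp_range[OF assms] orthogonal_comp_def rank_dim_range)

lemma orthogonal_kernel_imp_range:
  fixes G :: "real^'n::finite^'n"
  assumes "transpose G = G" and "\<And>w. G *v w = 0 \<Longrightarrow> x \<bullet> w = 0"
  shows "x \<in> range ((*v) G)"
proof -
  have "x \<in> (range ((*v) G))\<^sup>\<bottom>\<^sup>\<bottom>"
    using assms(2) unfolding kernel_eq_orthogonal_comp_range[OF assms(1), symmetric]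
    by (auto simp: orthogonal_comp_def orthogonal_def inner_commute)
  then show ?thesis by (simp add: orthogonal_comp_self subspace_range_matrix)
qed

lemma quadratic_nonneg_imp_discriminant_le:
  fixes A b C :: real
  assumes nonneg: "\<And>t. 0 \<le> C + 2 * t * b + t\<^sup>2 * A" and "0 \<le> A"
  shows "b\<^sup>2 \<le> A * C"
proof (cases "A = 0")
  case True
  have "0 \<le> C + 2 * (- (C + 1) / (2 * b)) * b" if "b \<noteq> 0"
    using nonneg[of "- (C + 1) / (2 * b)"] True by simp
  then have "b = 0" using True by (cases "b = 0") (auto simp: field_simps)
  then show ?thesis using True by simp
next
  case False
  then have "0 < A" using \<open>0 \<le> A\<close> by simp
  moreover have "0 \<le> C + 2 * (- b / A) * b + (- b / A)\<^sup>2 * A" by (rule nonneg)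
  ultimately show ?thesis by (simp add: field_simps power2_eq_square)
qed

lemma psd_cauchy_schwarz:
  fixes G :: "real^'n::finite^'n"
  assumes sym: "transpose G = G" and psd: "\<And>a. 0 \<le> a \<bullet> (G *v a)"
  shows "(v \<bullet> (G *v a))\<^sup>2 \<le> (a \<bullet> (G *v a)) * (v \<bullet> (G *v v))"
proof (rule quadratic_nonneg_imp_discriminant_le)
  fix t :: real
  have "0 \<le> (v + t *\<^sub>R a) \<bullet> (G *v (v + t *\<^sub>R a))" by (rule psd)
  also have "\<dots> = v \<bullet> (G *v v) + 2 * t * (v \<bullet> (G *v a)) + t\<^sup>2 * (a \<bullet> (G *v a))"
    using inner_matrix_symmetric[OF sym, of a v]
    by (simp add: matrix_vector_right_distrib matrix_vector_mult_scaleR inner_add_left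
        inner_add_right algebra_simps inner_commute power2_eq_square)
  finally show "0 \<le> v \<bullet> (G *v v) + 2 * t * (v \<bullet> (G *v a)) + t\<^sup>2 * (a \<bullet> (G *v a))" .
qed (rule psd)

lemma psd_dominates_orthogonal_kernel:
  fixes G :: "real^'n::finite^'n"
  assumes sym: "transpose G = G" and psd: "\<And>a. 0 \<le> a \<bullet> (G *v a)"
    and orth: "\<And>w. G *v w = 0 \<Longrightarrow> x \<bullet> w = 0"
  obtains C where "\<And>a. (x \<bullet> a)\<^sup>2 \<le> C * (a \<bullet> (G *v a))"
proof -
  obtain v where "x = G *v v"
    using orthogonal_kernel_imp_range[OF sym orth] by blast
  then have "x \<bullet> a = v \<bullet> (G *v a)" for a
    by (simp add: inner_matrix_symmetric[OF sym])
  then have "(x \<bullet> a)\<^sup>2 \<le> (v \<bullet> (G *v v)) * (a \<bullet> (G *v a))" for a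
    using psd_cauchy_schwarz[OF sym psd, of v a] by (simp add: mult.commute)
  then show thesis by (rule that)
qed

lemma rank_le_1_if_outer_product:
  fixes G :: "real^'n::finite^'n" and z :: "'n \<Rightarrow> complex"
  assumes outer: "\<And>i j. z i * z j = \<gamma> * of_real (G $ i $ j)" and "z \<noteq> (\<lambda>_. 0)"
  shows "rank G \<le> 1"
proof -
  obtain k where "z k \<noteq> 0" using \<open>z \<noteq> (\<lambda>_. 0)\<close> by blast
  then have "z k * z k \<noteq> 0" by simp
  then have "\<gamma> \<noteq> 0" and Gkk: "G $ k $ k \<noteq> 0" unfolding outer by auto
  have rank1: "G $ i $ j * G $ k $ k = G $ i $ k * G $ j $ k" for i j
  proof -
    have "\<gamma> * \<gamma> * of_real (G $ i $ j * G $ k $ k) = (z i * z j) * (z k * z k)"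
      by (simp add: outer)
    also have "\<dots> = (z i * z k) * (z j * z k)" by (simp add: ac_simps)
    also have "\<dots> = \<gamma> * \<gamma> * of_real (G $ i $ k * G $ j $ k)" by (simp add: outer)
    finally show ?thesis using \<open>\<gamma> \<noteq> 0\<close> by (simp flip: of_real_mult)
  qed
  define col where "col = (\<chi> i. G $ i $ k)"
  have "G *v v = ((\<Sum>j\<in>UNIV. G $ j $ k * v $ j) / G $ k $ k) *\<^sub>R col" for v
    using Gkk
    by (simp add: vec_eq_iff col_def matrix_vector_mult_def sum_distrib_left sum_divide_distrib
        rank1[symmetric] field_simps)
  then have "range ((*v) G) \<subseteq> span {col}"
    by (auto intro: span_scale span_base)
  then have "dim (range ((*v) G)) \<le> card {col}"
    by (intro dim_le_card) auto
  then show ?thesis by (simp add: rank_dim_range)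
qed

section \<open>Extreme rays of the Hankel spectrahedron\<close>

lemma hankel_cone_perturb:
  assumes L: "L \<in> hankel_cone I" and M: "dual2 M" "\<And>q. q \<in> I \<Longrightarrow> hom_deg 2 q \<Longrightarrow> M q = 0"
    and dominated: "\<And>a. \<bar>t * M (lin a * lin a)\<bar> \<le> s * L (lin a * lin a)"
  shows "(\<lambda>f. s * L f + t * M f) \<in> hankel_cone I"
  unfolding hankel_cone_def
proof (intro CollectI conjI allI ballI impI)
  show "dual2 (\<lambda>f. s * L f + t * M f)"
    using L M(1) by (simp add: hankel_cone_def dual2_linear_combination)
  show "0 \<le> s * L (lin a * lin a) + t * M (lin a * lin a)" for a
    using dominated[of a] by linarith
  show "s * L q + t * M q = 0" if "q \<in> I" "hom_deg 2 q" for q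
    using L M(2) that by (simp add: hankel_cone_def)
qed

lemma extreme_ray_hankel_cone_dominated:
  assumes ext: "extreme_ray (hankel_cone I) L"
    and M: "dual2 M" "\<And>q. q \<in> I \<Longrightarrow> hom_deg 2 q \<Longrightarrow> M q = 0"
    and dominated: "\<And>a. \<bar>M (lin a * lin a)\<bar> \<le> K * L (lin a * lin a)"
  obtains \<mu> where "\<And>f. M f = \<mu> * L f"
proof -
  have L: "L \<in> hankel_cone I" using ext by (simp add: extreme_ray_def)
  define \<epsilon> where "\<epsilon> = 1 / (\<bar>K\<bar> + 1)"
  have "0 < \<epsilon>" "\<epsilon> * K \<le> 1" by (auto simp: \<epsilon>_def field_simps)
  have half: "\<bar>\<epsilon> / 2 * M (lin a * lin a)\<bar> \<le> 1 / 2 * L (lin a * lin a)" for a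
  proof -
    have "\<epsilon> * \<bar>M (lin a * lin a)\<bar> \<le> (\<epsilon> * K) * L (lin a * lin a)"
      using mult_left_mono[OF dominated \<open>0 < \<epsilon>\<close>[THEN less_imp_le]] by (simp add: mult.assoc)
    also have "\<dots> \<le> L (lin a * lin a)"
      using mult_right_mono[OF \<open>\<epsilon> * K \<le> 1\<close>, of "L (lin a * lin a)"] L
      by (simp add: hankel_cone_def)
    finally show ?thesis using \<open>0 < \<epsilon>\<close> by (simp add: abs_mult)
  qed
  have "(\<lambda>f. 1 / 2 * L f + \<epsilon> / 2 * M f) \<in> hankel_cone I"
    using half by (intro hankel_cone_perturb[OF L M])
  moreover have "(\<lambda>f. 1 / 2 * L f + - \<epsilon> / 2 * M f) \<in> hankel_cone I"
  proof (intro hankel_cone_perturb[OF L M])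
    show "\<bar>- \<epsilon> / 2 * M (lin a * lin a)\<bar> \<le> 1 / 2 * L (lin a * lin a)" for a
      using half[of a] by simp
  qed
  moreover have "L = (\<lambda>f. (1 / 2 * L f + \<epsilon> / 2 * M f) + (1 / 2 * L f + - \<epsilon> / 2 * M f))"
    by (simp add: fun_eq_iff field_simps)
  ultimately obtain c where "(\<lambda>f. 1 / 2 * L f + \<epsilon> / 2 * M f) = (\<lambda>f. c * L f)"
    using ext unfolding extreme_ray_def by blast
  then have "M f = ((2 * c - 1) / \<epsilon>) * L f" for f
    using \<open>0 < \<epsilon>\<close> by (simp add: fun_eq_iff field_simps)
  then show thesis by (rule that)
qed

lemma dual2_monomial_mult_lin_kernel:
  assumes "dual2 L" and "gram L *v w = 0" and "mon_deg m = 1"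
  shows "L (Poly_Mapping.single m r * lin w) = 0"
proof -
  obtain i where "m = Poly_Mapping.single i 1"
    using assms(3) by (rule mon_deg_eq_1_imp_single)
  then have "Poly_Mapping.single m r * lin w = lin (axis i r) * lin w"
    by (simp add: lin_axis)
  then show ?thesis by (simp add: dual2_lin_mult_lin[OF assms(1)] assms(2))
qed

lemma hankel_cone_vanishes_on_kernel_ideal:
  assumes hom: "homogeneous_ideal I" and L: "L \<in> hankel_cone I"
    and W: "\<And>w. w \<in> W \<Longrightarrow> gram L *v w = 0"
    and f: "f \<in> ideal_gen (lin ` W \<union> I)" "hom_deg 2 f"
  shows "L f = 0"
proof -
  define Ih where "Ih = I \<inter> {f. \<exists>d. hom_deg d f}"
  have dL: "dual2 L" and LI: "\<And>q. q \<in> I \<Longrightarrow> hom_deg 2 q \<Longrightarrow> L q = 0"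
    using L by (auto simp: hankel_cone_def)
  have f_Ih: "f \<in> ideal_gen (lin ` W \<union> Ih)"
    using f(1) ideal_gen_Un_homogeneous_ideal[OF hom] by (auto simp: Ih_def)
  show ?thesis
  proof (rule dual2_vanishes_on_ideal_gen[OF dL _ f_Ih f(2)])
    fix a assume "a \<in> lin ` W \<union> Ih"
    then show "\<exists>d. hom_deg d a \<and> (\<forall>m r. mon_deg m + d = 2 \<longrightarrow> L (Poly_Mapping.single m r * a) = 0)"
    proof
      assume "a \<in> lin ` W"
      then show ?thesis
        using dual2_monomial_mult_lin_kernel[OF dL] W hom_deg_lin by fastforce
    next
      assume "a \<in> Ih"
      then obtain d where "a \<in> I" and d: "hom_deg d a" by (auto simp: Ih_def)
      have "L (Poly_Mapping.single m r * a) = 0" if "mon_deg m + d = 2" for m r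
        using LI homogeneous_ideal_mult[OF hom \<open>a \<in> I\<close>] hom_deg_mult[OF hom_deg_single d] that
        by metis
      then show ?thesis using d by blast
    qed
  qed
qed

lemma hankel_cone_eq_0_if_kernel_base_point_free:
  fixes I :: "'n::finite mpoly set"
  assumes hom: "homogeneous_ideal I" and bpf: "p_bpf p I" and L: "L \<in> hankel_cone I"
    and small_rank: "hank_rank L \<le> p" and free: "base_point_free I {w. gram L *v w = 0}"
  shows "L = (\<lambda>_. 0)"
proof -
  define W where "W = {w. gram L *v w = 0}"
  have "CARD('n) - dim W \<le> p"
    using dim_kernel_add_rank[OF transpose_gram, of L] small_rank by (simp add: W_def hank_rank_def)
  then have gen: "f \<in> ideal_gen (lin ` W \<union> I)" if "hom_deg 2 f" for f
    using bpf free subspace_matrix_kernel that unfolding p_bpf_def W_def by blast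
  have "L f = 0" if "hom_deg 2 f" for f
    by (rule hankel_cone_vanishes_on_kernel_ideal[OF hom L _ gen[OF that] that]) (simp add: W_def)
  then show ?thesis
    using L unfolding hankel_cone_def dual2_def by blast
qed

lemma eval_re_dominated_if_kernel_base_point:
  assumes L: "L \<in> hankel_cone I" and base: "\<And>w. gram L *v w = 0 \<Longrightarrow> ceval (lin w) z = 0"
  obtains K where "\<And>a. \<bar>eval_re c z (lin a * lin a)\<bar> \<le> K * L (lin a * lin a)"
proof -
  define G where "G = gram L"
  have sym: "transpose G = G" and psd: "\<And>a. 0 \<le> a \<bullet> (G *v a)"
    using transpose_gram hankel_cone_psd[OF L] by (auto simp: G_def)
  define x where "x = (\<chi> i. Re (z i))"
  define y where "y = (\<chi> i. Im (z i))"
  have Re: "Re (ceval (lin a) z) = x \<bullet> a" and Im: "Im (ceval (lin a) z) = y \<bullet> a" for a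
    by (simp_all add: ceval_lin x_def y_def inner_vec_def Re_sum Im_sum mult.commute)
  have "x \<bullet> w = 0" and "y \<bullet> w = 0" if "G *v w = 0" for w
    using base[of w] that Re[of w] Im[of w] by (simp_all add: G_def)
  then obtain Cx Cy where Cx: "\<And>a. (x \<bullet> a)\<^sup>2 \<le> Cx * (a \<bullet> (G *v a))"
    and Cy: "\<And>a. (y \<bullet> a)\<^sup>2 \<le> Cy * (a \<bullet> (G *v a))"
    using psd_dominates_orthogonal_kernel[OF sym psd] by metis
  have "\<bar>eval_re c z (lin a * lin a)\<bar> \<le> (cmod c * (Cx + Cy)) * L (lin a * lin a)" for a
  proof -
    have "\<bar>eval_re c z (lin a * lin a)\<bar> \<le> cmod (c * (ceval (lin a) z)\<^sup>2)"
      unfolding eval_re_lin_sq by (rule abs_Re_le_cmod)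
    also have "\<dots> = cmod c * ((x \<bullet> a)\<^sup>2 + (y \<bullet> a)\<^sup>2)"
      by (simp add: norm_mult norm_power cmod_power2 Re Im)
    also have "\<dots> \<le> cmod c * ((Cx + Cy) * (a \<bullet> (G *v a)))"
      using add_mono[OF Cx Cy] by (intro mult_left_mono) (simp_all add: distrib_right)
    also have "\<dots> = (cmod c * (Cx + Cy)) * L (lin a * lin a)"
      using L by (simp add: dual2_lin_mult_lin hankel_cone_def G_def)
    finally show ?thesis .
  qed
  then show thesis by (rule that)
qed

lemma extreme_ray_rank_le_1_if_kernel_base_point:
  assumes ext: "extreme_ray (hankel_cone I) L" and z: "z \<in> cpoints I"
    and base: "\<And>w. gram L *v w = 0 \<Longrightarrow> ceval (lin w) z = 0"
  shows "hank_rank L \<le> 1"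
proof -
  have L: "L \<in> hankel_cone I" using ext by (simp add: extreme_ray_def)
  have "\<exists>\<mu>. \<forall>f. eval_re c z f = \<mu> * L f" for c
  proof -
    obtain K where "\<And>a. \<bar>eval_re c z (lin a * lin a)\<bar> \<le> K * L (lin a * lin a)"
      using eval_re_dominated_if_kernel_base_point[OF L base] by blast
    then show ?thesis
      using extreme_ray_hankel_cone_dominated[OF ext dual2_eval_re eval_re_vanishes[OF z]] by metis
  qed
  then obtain \<mu> where \<mu>: "\<And>c f. eval_re c z f = \<mu> c * L f" by metis
  have "Re (c * (z i * z j)) = \<mu> c * gram L $ i $ j" for c i j
    using gram_eval_re[of c z i j] by (simp add: gram_def \<mu>)
  from this[of 1] this[of "- \<i>"]
  have "z i * z j = Complex (\<mu> 1) (\<mu> (- \<i>)) * of_real (gram L $ i $ j)" for i j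
    by (intro complex_eqI) (simp_all add: add.commute)
  moreover have "z \<noteq> (\<lambda>_. 0)" using z by (simp add: cpoints_def)
  ultimately have "rank (gram L) \<le> 1" by (rule rank_le_1_if_outer_product)
  then show ?thesis by (simp add: hank_rank_def)
qed

lemma extreme_ray_hank_rank_gt:
  assumes hom: "homogeneous_ideal I" and bpf: "p_bpf p I"
    and ext: "extreme_ray (hankel_cone I) L" and "1 < hank_rank L"
  shows "p < hank_rank L"
proof (rule ccontr)
  assume "\<not> p < hank_rank L"
  then have small_rank: "hank_rank L \<le> p" by simp
  have L: "L \<in> hankel_cone I" and "L \<noteq> (\<lambda>_. 0)"
    using ext by (auto simp: extreme_ray_def)
  show False
  proof (cases "base_point_free I {w. gram L *v w = 0}")
    case True
    with \<open>L \<noteq> (\<lambda>_. 0)\<close> show False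
      using hankel_cone_eq_0_if_kernel_base_point_free[OF hom bpf L small_rank] by blast
  next
    case False
    then obtain z where "z \<in> cpoints I" "\<And>w. gram L *v w = 0 \<Longrightarrow> ceval (lin w) z = 0"
      unfolding base_point_free_def by auto
    then have "hank_rank L \<le> 1"
      by (rule extreme_ray_rank_le_1_if_kernel_base_point[OF ext])
    then show False using \<open>1 < hank_rank L\<close> by simp
  qed
qed

theorem theorem2p2:
  fixes I :: "'n::finite mpoly set" and p :: nat
  assumes "homogeneous_ideal I" and "saturated I"
    and "nondegenerate I"
    and "p \<ge> 1"
    and "p_bpf p I"
  shows "hankel_index I \<ge> enat (p + 1)"
proof (cases "\<exists>L. extreme_ray (hankel_cone I) L \<and> hank_rank L > 1")
  case True
  define P where "P r \<longleftrightarrow> r > 1 \<and> (\<exists>L. extreme_ray (hankel_cone I) L \<and> hank_rank L = r)" for r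
  have "\<exists>r. P r" using True by (auto simp: P_def)
  then have "P (LEAST r. P r)" by (rule LeastI_ex)
  then obtain L where "extreme_ray (hankel_cone I) L" "1 < hank_rank L" "hank_rank L = (LEAST r. P r)"
    by (auto simp: P_def)
  then have "p < (LEAST r. P r)"
    using extreme_ray_hank_rank_gt[OF assms(1,5)] by metis
  then show ?thesis using True by (simp add: hankel_index_def P_def)
next
  case False
  then show ?thesis by (auto simp: hankel_index_def)
qed

end
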